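(* Let $R$ be a $*$-reducing ring and let $p,q\in R$ be projections. Then the following are equivalent: (1) $(1-p)(1-q)$ is MP invertible; (2) $1-p-q$ is MP invertible; (3) $pq$ is MP invertible.
   Context: $R$ is an associative ring with identity $1$ and an involution $a\mapsto a^*$ (satisfying $(a^* )^*=a$, $(a+b)^*=a^*+b^*$, $(ab)^*=b^*a^*$). $R$ is $*$-reducing if $a^*a=0$ implies $a=0$ for all $a\in R$. An element $a$ is MP invertible if there is $b$ with $aba=a$, $bab=b$, $(ab)^*=ab$, $(ba)^*=ba$. A projection is an element $p$ with $p^2=p=p^*$. *)

theory Defs
  imports Main
begin

definition involution :: "('a::ring_1 \<Rightarrow> 'a) \<Rightarrow> bool" where
  "involution st \<longleftrightarrow>
     (\<forall>a. st (st a) = a) \<and> (\<forall>a b. st (a + b) = st a + st b) \<and>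
     (\<forall>a b. st (a * b) = st b * st a)"

definition star_reducing :: "('a::ring_1 \<Rightarrow> 'a) \<Rightarrow> bool" where
  "star_reducing st \<longleftrightarrow> (\<forall>a. st a * a = 0 \<longrightarrow> a = 0)"

definition MP_invertible :: "('a::ring_1 \<Rightarrow> 'a) \<Rightarrow> 'a \<Rightarrow> bool" where
  "MP_invertible st a \<longleftrightarrow>
     (\<exists>b. a * b * a = a \<and> b * a * b = b \<and> st (a * b) = a * b \<and> st (b * a) = b * a)"

definition projection :: "('a::ring_1 \<Rightarrow> 'a) \<Rightarrow> 'a \<Rightarrow> bool" where
  "projection st p \<longleftrightarrow> p * p = p \<and> st p = p"

end

theory Submission
  imports Defs
begin

text \<open>Write \<open>c = 1 - p - q\<close>; then \<open>p c = c q = - p q\<close> and \<open>c\<^sup>2\<close> commutes with \<open>p\<close> and \<open>q\<close>.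
  A Moore--Penrose inverse \<open>t\<close> of \<open>p q\<close> yields the inverse \<open>c + p t + t q - t - t\<^sup>*\<close> of \<open>c\<close>.
  Conversely, if \<open>b\<close> inverts \<open>c\<close>, then \<open>p q b p q = p c b c q = - p q\<close>, and \<open>- q b p\<close> inverts
  \<open>p q\<close>; the remaining equations follow because the range projection \<open>c b = b c\<close> of the
  self-adjoint \<open>c\<close> commutes with \<open>p\<close> and \<open>q\<close>. Replacing \<open>p, q\<close> by \<open>1 - p, 1 - q\<close> turns \<open>c\<close>
  into \<open>- c\<close>, which gives the equivalence with \<open>(1 - p)(1 - q)\<close>.\<close>

definition MP_inverse :: "('a::ring_1 \<Rightarrow> 'a) \<Rightarrow> 'a \<Rightarrow> 'a \<Rightarrow> bool" where
  "MP_inverse st a b \<longleftrightarrow>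
     a * b * a = a \<and> b * a * b = b \<and> st (a * b) = a * b \<and> st (b * a) = b * a"

lemma MP_invertible_iff_MP_inverse: "MP_invertible st a \<longleftrightarrow> (\<exists>b. MP_inverse st a b)"
  unfolding MP_invertible_def MP_inverse_def ..

lemma square_one_minus_sum_idempotents:
  fixes p q :: "'a::ring_1"
  assumes "p * p = p" and "q * q = q"
  shows "(1 - p - q) * (1 - p - q) = 1 - p - q + p * q + q * p"
  using assms by (simp add: algebra_simps)

lemma idempotent_commutes_with_square_one_minus_sum:
  fixes p q :: "'a::ring_1"
  assumes "p * p = p" and "q * q = q"
  shows "p * ((1 - p - q) * (1 - p - q)) = (1 - p - q) * (1 - p - q) * p"
    and "q * ((1 - p - q) * (1 - p - q)) = (1 - p - q) * (1 - p - q) * q"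
proof -
  have "p * (p * x) = p * x" "q * (q * x) = q * x" for x
    using assms by (simp_all add: mult.assoc[symmetric])
  then show "p * ((1 - p - q) * (1 - p - q)) = (1 - p - q) * (1 - p - q) * p"
    and "q * ((1 - p - q) * (1 - p - q)) = (1 - p - q) * (1 - p - q) * q"
    using assms by (simp_all add: square_one_minus_sum_idempotents algebra_simps)
qed

lemma mult_assoc_left_rewrite:
  fixes a b c :: "'a::semigroup_mult"
  assumes "a * b = c"
  shows "a * (b * x) = c * x"
  using assms by (simp add: mult.assoc[symmetric])

locale involutive_ring =
  fixes st :: "'a::ring_1 \<Rightarrow> 'a"
  assumes involution: "involution st"
begin

lemma st_st [simp]: "st (st a) = a"
  and st_add [simp]: "st (a + b) = st a + st b"
  and st_mult [simp]: "st (a * b) = st b * st a"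
  using involution unfolding involution_def by auto

lemma st_0 [simp]: "st 0 = 0"
  using st_add[of 0 0] by simp

lemma st_1 [simp]: "st 1 = 1"
  using st_mult[of "st 1" 1] by simp

lemma st_uminus [simp]: "st (- a) = - st a"
  using st_add[of a "- a"] by (simp add: eq_neg_iff_add_eq_0 add.commute)

lemma st_diff [simp]: "st (a - b) = st a - st b"
  using st_add[of a "- b"] by simp

lemma projection_one_minus:
  assumes "projection st p"
  shows "projection st (1 - p)"
  using assms unfolding projection_def by (simp add: algebra_simps)

lemma MP_inverse_uminus:
  assumes "MP_inverse st a b"
  shows "MP_inverse st (- a) (- b)"
  using assms unfolding MP_inverse_def by simp

lemma MP_invertible_uminus_iff: "MP_invertible st (- a) \<longleftrightarrow> MP_invertible st a"
  using MP_inverse_uminus[of a] MP_inverse_uminus[of "- a"]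
  unfolding MP_invertible_iff_MP_inverse by force

lemma self_adjoint_MP_inverse_commute:
  assumes "st c = c" and "MP_inverse st c b"
  shows "c * b = b * c"
proof -
  have cbc: "c * b * c = c" and cb: "st b * c = c * b" and bc: "c * st b = b * c"
    using assms unfolding MP_inverse_def by (metis st_mult)+
  have "c * b * (b * c) = b * c"
    by (metis bc cbc mult.assoc)
  moreover have "c * b * (b * c) = c * b"
    by (metis cb cbc mult.assoc)
  ultimately show ?thesis by simp
qed

text \<open>If \<open>c\<close> is self-adjoint, the range projection \<open>c b\<close> equals \<open>c\<^sup>2 b\<^sup>2 = b\<^sup>2 c\<^sup>2\<close>,
  so it commutes with everything that commutes with \<open>c\<^sup>2\<close>.\<close>

lemma commute_square_imp_commute_MP_projection:
  assumes "st c = c" and "MP_inverse st c b" and x: "x * (c * c) = c * c * x"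
  shows "x * (c * b) = c * b * x"
proof -
  define E where "E = c * b"
  have cbc: "c * b * c = c"
    using assms(2) unfolding MP_inverse_def by auto
  have bc: "b * c = E"
    using self_adjoint_MP_inverse_commute[OF assms(1,2)] E_def by simp
  have Ec: "E * c = c" and cE: "c * E = c" and EE: "E * E = E"
    using cbc bc E_def by (metis mult.assoc)+
  have ccbb: "c * c * (b * b) = E" and bbcc: "b * b * (c * c) = E"
    using EE bc E_def by (metis mult.assoc)+
  have "(1 - E) * x * E = (1 - E) * c * (c * x * (b * b))"
    by (metis ccbb x mult.assoc)
  then have "x * E = E * x * E"
    using Ec by (simp add: algebra_simps)
  moreover have "E * x * (1 - E) = (b * b * x * c) * (c * (1 - E))"
    by (metis bbcc x mult.assoc)
  then have "E * x = E * x * E"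
    using cE EE by (simp add: algebra_simps)
  ultimately show ?thesis unfolding E_def by simp
qed

lemma MP_inverse_product_projections_absorb:
  assumes p: "projection st p" and q: "projection st q" and t: "MP_inverse st (p * q) t"
  shows "q * t = t" and "t * p = t" and "t * t = t" and "p * (t * q) = p * q"
proof -
  have pp: "p * p = p" and sp: "st p = p" and qq: "q * q = q" and sq: "st q = q"
    using p q unfolding projection_def by auto
  have t1: "p * (q * (t * (p * q))) = p * q" and t2: "t * (p * (q * t)) = t"
    and e: "st t * (q * p) = p * (q * t)" and f: "q * (p * st t) = t * (p * q)"
    using t sp sq unfolding MP_inverse_def by (simp_all add: mult.assoc)
  have "p * (q * (t * p)) = p * (q * t) * p"
    by (simp add: mult.assoc)
  also have "\<dots> = st t * (q * p) * p"
    using e by simp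
  also have "\<dots> = st t * (q * p)"
    using pp by (simp add: mult.assoc)
  finally have pqtp: "p * (q * (t * p)) = p * (q * t)"
    using e by simp
  have "t * p = t * (p * (q * t)) * p"
    using t2 by simp
  also have "\<dots> = t * (p * (q * (t * p)))"
    by (simp add: mult.assoc)
  finally show tp: "t * p = t"
    using pqtp t2 by simp
  have "q * (t * (p * q)) = q * (q * (p * st t))"
    using f by simp
  also have "\<dots> = q * (p * st t)"
    using qq by (simp add: mult.assoc[symmetric])
  finally have qtpq: "q * (t * (p * q)) = t * (p * q)"
    using f by simp
  have "q * t = q * (t * (p * (q * t)))"
    using t2 by simp
  also have "\<dots> = q * (t * (p * q)) * t"
    by (simp add: mult.assoc)
  finally show qt: "q * t = t"
    using qtpq t2 by (simp add: mult.assoc)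
  show "t * t = t"
    using t2 tp qt by (simp add: mult.assoc[symmetric])
  show "p * (t * q) = p * q"
    using t1 tp qt by (simp add: mult.assoc[symmetric])
qed

lemma MP_inverse_product_projections_adjoint:
  assumes p: "projection st p" and q: "projection st q" and t: "MP_inverse st (p * q) t"
  shows "st t * q = st t" and "p * st t = st t"
    and "st t * p = p * t" and "q * st t = t * q"
    and "t * (q * p) = q * p" and "q * (p * t) = q * p"
    and "p * (t * st t) = st t" and "st t * (t * q) = st t"
proof -
  have sp: "st p = p" and sq: "st q = q"
    using p q unfolding projection_def by auto
  have t2: "t * (p * (q * t)) = t"
    and e: "st t * (q * p) = p * (q * t)" and f: "q * (p * st t) = t * (p * q)"
    using t sp sq unfolding MP_inverse_def by (simp_all add: mult.assoc)
  note qt = MP_inverse_product_projections_absorb(1)[OF p q t]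
    and tp = MP_inverse_product_projections_absorb(2)[OF p q t]
    and ptq = MP_inverse_product_projections_absorb(4)[OF p q t]
  show stq: "st t * q = st t" and pst: "p * st t = st t"
    using arg_cong[OF qt, of st] arg_cong[OF tp, of st] sp sq by simp_all
  show stp: "st t * p = p * t"
    using e stq qt by (simp add: mult.assoc[symmetric])
  show qst: "q * st t = t * q"
    using f pst tp by (simp add: mult.assoc[symmetric])
  have "t * (q * p) = st (p * (t * q))"
    using qst sp sq by (simp add: mult.assoc)
  then show "t * (q * p) = q * p"
    using ptq sp sq by simp
  have "q * (p * t) = st (p * (t * q))"
    using stp sp sq by (simp add: mult.assoc)
  then show "q * (p * t) = q * p"
    using ptq sp sq by simp
  have "st t = st (t * (p * (q * t)))"
    using t2 by simp
  also have "\<dots> = st t * (q * p) * st t"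
    using sp sq by (simp add: mult.assoc)
  also have "\<dots> = p * (t * st t)"
    using e qt by (simp add: mult.assoc)
  finally show "p * (t * st t) = st t" ..
  have "st t = st (t * (p * q) * t)"
    using t2 by (simp add: mult.assoc)
  also have "\<dots> = st t * (q * (p * st t))"
    using sp sq by (simp add: mult.assoc)
  also have "\<dots> = st t * (t * (p * q))"
    using f by simp
  also have "\<dots> = st t * (t * q)"
    using tp by (metis mult.assoc)
  finally show "st t * (t * q) = st t" ..
qed

lemma MP_inverse_one_minus_sum_from_product:
  assumes p: "projection st p" and q: "projection st q" and t: "MP_inverse st (p * q) t"
  shows "MP_inverse st (1 - p - q) (1 - p - q + p * t + t * q - t - st t)"
proof -
  have pp: "p * p = p" and sp: "st p = p" and qq: "q * q = q" and sq: "st q = q"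
    using p q unfolding projection_def by auto
  note rules = pp qq
    MP_inverse_product_projections_absorb[OF p q t] MP_inverse_product_projections_adjoint[OF p q t]
  note rules_assoc = rules[THEN mult_assoc_left_rewrite, simplified mult.assoc]
  define c where "c = 1 - p - q"
  define b where "b = c + p * t + t * q - t - st t"
  have sc: "st c = c" and sb: "st b = b"
    unfolding b_def c_def using sp sq rules by (simp_all add: algebra_simps)
  have "c * b = b * c" and "c * b * c = c" and "b * c * b = b"
    unfolding b_def c_def by (simp_all add: algebra_simps rules rules_assoc)
  then have "MP_inverse st c b"
    unfolding MP_inverse_def using sb sc by simp
  then show ?thesis
    unfolding b_def c_def .
qed

lemma MP_inverse_product_from_one_minus_sum:
  assumes p: "projection st p" and q: "projection st q" and b: "MP_inverse st (1 - p - q) b"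
  shows "MP_inverse st (p * q) (- (q * b * p))"
proof -
  define c where "c = 1 - p - q"
  define E where "E = c * b"
  have pp: "p * p = p" and sp: "st p = p" and qq: "q * q = q" and sq: "st q = q"
    using p q unfolding projection_def by auto
  have pp': "p * (p * x) = p * x" and qq': "q * (q * x) = q * x" for x
    using pp qq by (simp_all add: mult.assoc[symmetric])
  have sc: "st c = c"
    using sp sq c_def by simp
  have b': "MP_inverse st c b"
    using b c_def by simp
  then have Ec: "E * c = c" and sE: "st E = E"
    unfolding MP_inverse_def E_def by auto
  have bc: "b * c = E"
    using self_adjoint_MP_inverse_commute[OF sc b'] E_def by simp
  have Eb: "E * (b * x) = b * x" for x
    using b' bc unfolding MP_inverse_def by (simp add: mult.assoc[symmetric])
  have pE: "p * E = E * p" and qE: "q * E = E * q"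
    using commute_square_imp_commute_MP_projection[OF sc b']
      idempotent_commutes_with_square_one_minus_sum[OF pp qq]
    unfolding c_def E_def by auto
  have qE': "E * (q * x) = q * (E * x)" for x
    using qE by (simp add: mult.assoc[symmetric])
  have pc: "p * c = - (p * q)" and cq: "c * q = - (p * q)"
    unfolding c_def by (simp_all add: algebra_simps pp qq)
  have pq_t: "p * q * - (q * b * p) = E * p"
  proof -
    have "p * q * - (q * b * p) = p * c * b * p"
      using pc qq' by (simp add: mult.assoc)
    also have "\<dots> = p * E * p"
      by (simp add: E_def mult.assoc)
    also have "\<dots> = E * p"
      using pE pp by (simp add: mult.assoc)
    finally show ?thesis .
  qed
  have t_pq: "- (q * b * p) * (p * q) = E * q"
  proof -
    have "- (q * b * p) * (p * q) = q * b * (c * q)"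
      using cq pp' by (simp add: mult.assoc)
    also have "\<dots> = q * (b * c) * q"
      by (simp add: mult.assoc)
    also have "\<dots> = E * q"
      using bc qE qq by (simp add: mult.assoc)
    finally show ?thesis .
  qed
  have "p * q * - (q * b * p) * (p * q) = E * p * (p * q)"
    by (simp only: pq_t)
  also have "\<dots> = - (E * c * q)"
    using cq pp' by (simp add: mult.assoc)
  also have "\<dots> = p * q"
    using Ec cq by simp
  finally have m1: "p * q * - (q * b * p) * (p * q) = p * q" .
  have "- (q * b * p) * (p * q) * - (q * b * p) = E * q * - (q * b * p)"
    by (simp only: t_pq)
  also have "\<dots> = - (q * b * p)"
    using qq' qE' Eb by (simp add: mult.assoc)
  finally have m2: "- (q * b * p) * (p * q) * - (q * b * p) = - (q * b * p)" .
  have "st (p * q * - (q * b * p)) = p * q * - (q * b * p)"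
    unfolding pq_t using sE sp pE by simp
  moreover have "st (- (q * b * p) * (p * q)) = - (q * b * p) * (p * q)"
    unfolding t_pq using sE sq qE by simp
  ultimately show ?thesis
    unfolding MP_inverse_def using m1 m2 by blast
qed

lemma MP_invertible_one_minus_sum_iff_product:
  assumes "projection st p" and "projection st q"
  shows "MP_invertible st (1 - p - q) \<longleftrightarrow> MP_invertible st (p * q)"
  using MP_inverse_one_minus_sum_from_product[OF assms] MP_inverse_product_from_one_minus_sum[OF assms]
  unfolding MP_invertible_iff_MP_inverse by blast

end

theorem lemma2p10:
  fixes st :: "'a::ring_1 \<Rightarrow> 'a" and p q :: 'a
  assumes "involution st" and "star_reducing st"
    and "projection st p" and "projection st q"
  shows "(MP_invertible st ((1 - p) * (1 - q)) \<longleftrightarrow> MP_invertible st (1 - p - q))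
       \<and> (MP_invertible st (1 - p - q) \<longleftrightarrow> MP_invertible st (p * q))"
proof -
  interpret involutive_ring st
    by unfold_locales (rule assms(1))
  have "MP_invertible st ((1 - p) * (1 - q)) \<longleftrightarrow> MP_invertible st (1 - (1 - p) - (1 - q))"
    using MP_invertible_one_minus_sum_iff_product assms(3,4) projection_one_minus by blast
  also have "1 - (1 - p) - (1 - q) = - (1 - p - q)"
    by (simp add: algebra_simps)
  finally show ?thesis
    using MP_invertible_one_minus_sum_iff_product[OF assms(3,4)] MP_invertible_uminus_iff by blast
qed

end
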